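(* There exists a finite set $B$ of closed, bounded line segments in $\mathbb{R}^2$ (one may take three segments) such that $R(B)=\{p\in\mathbb{R}^2: \text{every line through } p \text{ intersects } B\}$ has a maximal region consisting of a single point $p$ that does not lie on any segment of $B$.
   Context: A region is a bounded, closed, connected subset of $\mathbb{R}^2$. For a set $P\subseteq\mathbb{R}^2$, a maximal region of $P$ is a region $R$ such that for every point $p\in R$ there is an open ball $A$ centered at $p$ with $A\cap R = A\cap P$. A line intersects $B$ if it meets at least one segment of $B$. *)

theory Defs
  imports "HOL-Analysis.Analysis"
begin

definition is_segment :: "(real^2) set \<Rightarrow> bool" where
  "is_segment S \<longleftrightarrow> (\<exists>a b. a \<noteq> b \<and> S = closed_segment a b)"

definition is_line :: "(real^2) set \<Rightarrow> bool" where
  "is_line L \<longleftrightarrow> (\<exists>q v. v \<noteq> 0 \<and> L = {q + t *\<^sub>R v | t. True})"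

definition line_meets :: "(real^2) set \<Rightarrow> (real^2) set set \<Rightarrow> bool" where
  "line_meets L B \<longleftrightarrow> (\<exists>S\<in>B. L \<inter> S \<noteq> {})"

definition RB :: "(real^2) set set \<Rightarrow> (real^2) set" where
  "RB B = {p. \<forall>L. is_line L \<and> p \<in> L \<longrightarrow> line_meets L B}"

definition is_region :: "(real^2) set \<Rightarrow> bool" where
  "is_region R \<longleftrightarrow> bounded R \<and> closed R \<and> connected R"

definition maximal_region :: "(real^2) set \<Rightarrow> (real^2) set \<Rightarrow> bool" where
  "maximal_region P R \<longleftrightarrow> is_region R \<and>
     (\<forall>p\<in>R. \<exists>e>0. ball p e \<inter> R = ball p e \<inter> P)"

end

theory Submission
  imports Defs
begin

text \<open>Seen from the origin, the three segments below cover the slope ranges \<open>[0, 1]\<close>,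
  \<open>[1, \<infinity>]\<close> and \<open>[-\<infinity>, 0]\<close>, so every line through the origin meets one of them, while none
  contains the origin. The ranges only abut: the lines \<open>y = 0\<close>, \<open>x = 0\<close> and \<open>y = x\<close> touch the
  configuration only on one side. Hence for a point \<open>q \<noteq> 0\<close> near the origin, the parallel
  to one of these three lines through \<open>q\<close> misses all three segments, so the origin is an
  isolated point of \<open>R(B)\<close>.\<close>

lemma vec2_eq_iff: "(x::real^2) = y \<longleftrightarrow> x$1 = y$1 \<and> x$2 = y$2"
  by (simp add: vec_eq_iff forall_2)

lemma is_segment_closed_segment: "a \<noteq> b \<Longrightarrow> is_segment (closed_segment a b)"
  unfolding is_segment_def by blast

lemma closed_segment_vector2E:
  assumes "z \<in> closed_segment (vector[a1,a2]) (vector[b1,b2] :: real^2)"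
  obtains u where "0 \<le> u" "u \<le> 1" "z$1 = (1-u)*a1 + u*b1" "z$2 = (1-u)*a2 + u*b2"
  using assms unfolding closed_segment_def by auto

lemma closed_segment_vector2I:
  assumes "0 \<le> u" "u \<le> 1" "z$1 = (1-u)*a1 + u*b1" "z$2 = (1-u)*a2 + u*b2"
  shows "z \<in> closed_segment (vector[a1,a2]) (vector[b1,b2] :: real^2)"
  unfolding closed_segment_def using assms
  by (auto simp: vec2_eq_iff intro!: exI[of _ u])

lemma is_line_through:
  assumes "v \<noteq> 0"
  shows "is_line {p + t *\<^sub>R v | t. True}" and "p \<in> {p + t *\<^sub>R v | t. True}"
  using assms unfolding is_line_def by (blast, auto intro!: exI[of _ 0])

lemma is_line_reparametrize:
  assumes "is_line L" "p \<in> L"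
  obtains v where "v \<noteq> 0" "L = {p + t *\<^sub>R v | t. True}"
proof -
  obtain q v where v: "v \<noteq> 0" and L: "L = {q + t *\<^sub>R v | t. True}"
    using assms(1) unfolding is_line_def by blast
  then obtain t0 where p: "p = q + t0 *\<^sub>R v" using assms(2) by auto
  have "q + t *\<^sub>R v = p + (t - t0) *\<^sub>R v" for t
    by (simp add: p algebra_simps)
  moreover have "p + t *\<^sub>R v = q + (t + t0) *\<^sub>R v" for t
    by (simp add: p algebra_simps)
  ultimately have "L = {p + t *\<^sub>R v | t. True}"
    unfolding L by (metis (no_types, opaque_lifting))
  with v show thesis by (rule that)
qed

lemma mem_RB_iff: "p \<in> RB B \<longleftrightarrow> (\<forall>v. v \<noteq> 0 \<longrightarrow> (\<exists>t. \<exists>S\<in>B. p + t *\<^sub>R v \<in> S))"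
proof
  assume p: "p \<in> RB B"
  show "\<forall>v. v \<noteq> 0 \<longrightarrow> (\<exists>t. \<exists>S\<in>B. p + t *\<^sub>R v \<in> S)"
  proof (intro allI impI)
    fix v :: "real^2" assume "v \<noteq> 0"
    with p have "line_meets {p + t *\<^sub>R v | t. True} B"
      unfolding RB_def using is_line_through by blast
    then show "\<exists>t. \<exists>S\<in>B. p + t *\<^sub>R v \<in> S" unfolding line_meets_def by blast
  qed
next
  assume hit: "\<forall>v. v \<noteq> 0 \<longrightarrow> (\<exists>t. \<exists>S\<in>B. p + t *\<^sub>R v \<in> S)"
  show "p \<in> RB B" unfolding RB_def
  proof (intro CollectI allI impI)
    fix L assume "is_line L \<and> p \<in> L"
    then obtain v where "v \<noteq> 0" "L = {p + t *\<^sub>R v | t. True}"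
      by (blast elim: is_line_reparametrize)
    with hit show "line_meets L B" unfolding line_meets_def by blast
  qed
qed

text \<open>The line through \<open>q\<close> orthogonal to \<open>c\<close> is the level set of \<open>x \<mapsto> c \<bullet> x\<close> through \<open>q\<close>.\<close>
lemma notin_RB_if_level_set_misses:
  fixes c q :: "real^2"
  assumes "c \<noteq> 0" and miss: "\<And>S z. S \<in> B \<Longrightarrow> z \<in> S \<Longrightarrow> c \<bullet> z \<noteq> c \<bullet> q"
  shows "q \<notin> RB B"
proof
  define v :: "real^2" where "v = vector[- c$2, c$1]"
  have "v \<noteq> 0" using \<open>c \<noteq> 0\<close> by (auto simp: v_def vec2_eq_iff)
  moreover assume "q \<in> RB B"
  ultimately obtain t S where "S \<in> B" "q + t *\<^sub>R v \<in> S" by (auto simp: mem_RB_iff)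
  moreover have "c \<bullet> (q + t *\<^sub>R v) = c \<bullet> q"
    by (simp add: v_def inner_vec_def sum_2 algebra_simps)
  ultimately show False using miss by metis
qed

lemma maximal_region_isolated_point:
  assumes "p \<in> P" "e > 0" "\<And>q. q \<in> ball p e \<Longrightarrow> q \<in> P \<Longrightarrow> q = p"
  shows "maximal_region P {p}"
  unfolding maximal_region_def is_region_def
proof (intro conjI ballI)
  show "\<exists>e>0. ball p' e \<inter> {p} = ball p' e \<inter> P" if "p' \<in> {p}" for p'
    using that assms by (intro exI[of _ e]) auto
qed auto

definition right_seg :: "(real^2) set" where
  "right_seg = closed_segment (vector[1,0]) (vector[1,1])"

definition lower_seg :: "(real^2) set" where
  "lower_seg = closed_segment (vector[-1,-1]) (vector[0,-1])"

definition diag_seg :: "(real^2) set" where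
  "diag_seg = closed_segment (vector[0,1]) (vector[-1,0])"

lemmas seg_defs = right_seg_def lower_seg_def diag_seg_def

lemma origin_notin_segs: "(0::real^2) \<notin> right_seg \<union> lower_seg \<union> diag_seg"
  unfolding seg_defs by (auto elim!: closed_segment_vector2E)

lemma origin_in_RB: "(0::real^2) \<in> RB {right_seg, lower_seg, diag_seg}"
  unfolding mem_RB_iff
proof (intro allI impI)
  fix v :: "real^2" assume "v \<noteq> 0"
  define a b where "a = v$1" and "b = v$2"
  have ab: "a \<noteq> 0 \<or> b \<noteq> 0" using \<open>v \<noteq> 0\<close> by (auto simp: vec2_eq_iff a_def b_def)
  have "\<exists>t. t *\<^sub>R v \<in> right_seg \<union> lower_seg \<union> diag_seg"
  proof (cases "a * b \<ge> 0")
    case True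
    show ?thesis
    proof (cases "\<bar>b\<bar> \<le> \<bar>a\<bar>")
      case True
      with ab have "a \<noteq> 0" by auto
      with \<open>a * b \<ge> 0\<close> True have "0 \<le> b/a" "b/a \<le> 1"
        by (auto simp: zero_le_divide_iff zero_le_mult_iff divide_le_eq_1 abs_if split: if_splits)
      then have "(1/a) *\<^sub>R v \<in> right_seg" unfolding right_seg_def
        by (intro closed_segment_vector2I[of "b/a"]) (auto simp: a_def[symmetric] b_def[symmetric] \<open>a \<noteq> 0\<close>)
      then show ?thesis by blast
    next
      case False
      then have "b \<noteq> 0" by auto
      with \<open>a * b \<ge> 0\<close> False have "0 \<le> a/b" "a/b \<le> 1"
        by (auto simp: zero_le_divide_iff zero_le_mult_iff divide_le_eq_1 abs_if split: if_splits)
      then have "(-1/b) *\<^sub>R v \<in> lower_seg" unfolding lower_seg_def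
        by (intro closed_segment_vector2I[of "1 - a/b"])
          (auto simp: a_def[symmetric] b_def[symmetric] \<open>b \<noteq> 0\<close> algebra_simps)
      then show ?thesis by blast
    qed
  next
    case False
    then have "a < 0 \<and> b > 0 \<or> a > 0 \<and> b < 0"
      by (metis linorder_neqE_linordered_idom mult_nonneg_nonneg mult_nonpos_nonpos
          less_imp_le mult_zero_left mult_zero_right order_refl)
    then have "b - a \<noteq> 0" "0 \<le> -a/(b-a)" "-a/(b-a) \<le> 1" by (auto simp: divide_simps)
    then have "(1/(b-a)) *\<^sub>R v \<in> diag_seg" unfolding diag_seg_def
      by (intro closed_segment_vector2I[of "-a/(b-a)"])
        (auto simp: a_def[symmetric] b_def[symmetric] divide_simps)
    then show ?thesis by blast
  qed
  then show "\<exists>t. \<exists>S\<in>{right_seg, lower_seg, diag_seg}. 0 + t *\<^sub>R v \<in> S" by auto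
qed

lemma notin_RB_near_origin:
  assumes "q \<in> ball (0::real^2) (1/2)" "q \<noteq> 0"
  shows "q \<notin> RB {right_seg, lower_seg, diag_seg}"
proof -
  have q: "\<bar>q$1\<bar> < 1/2" "\<bar>q$2\<bar> < 1/2"
    using assms(1) component_le_norm_cart[of q 1] component_le_norm_cart[of q 2] by auto
  consider "q$2 < 0" | "q$1 > 0" | "q$2 > q$1"
    using assms(2) by (fastforce simp: vec2_eq_iff)
  then show ?thesis
  proof cases
    case 1
    show ?thesis
      by (rule notin_RB_if_level_set_misses[of "vector[0,1]"])
        (use 1 q in \<open>auto simp: vec2_eq_iff inner_vec_def sum_2 seg_defs elim!: closed_segment_vector2E\<close>)
  next
    case 2
    show ?thesis
      by (rule notin_RB_if_level_set_misses[of "vector[1,0]"])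
        (use 2 q in \<open>auto simp: vec2_eq_iff inner_vec_def sum_2 seg_defs elim!: closed_segment_vector2E\<close>)
  next
    case 3
    show ?thesis
      by (rule notin_RB_if_level_set_misses[of "vector[-1,1]"])
        (use 3 q in \<open>auto simp: vec2_eq_iff inner_vec_def sum_2 seg_defs elim!: closed_segment_vector2E\<close>)
  qed
qed

theorem lemma2:
  shows "\<exists>B :: (real^2) set set. finite B \<and> card B = 3 \<and> (\<forall>S\<in>B. is_segment S) \<and>
           (\<exists>p. maximal_region (RB B) {p} \<and> (\<forall>S\<in>B. p \<notin> S))"
proof (intro exI conjI)
  show "finite {right_seg, lower_seg, diag_seg}" by simp
  have "right_seg \<noteq> lower_seg" "right_seg \<noteq> diag_seg" "lower_seg \<noteq> diag_seg"
    unfolding seg_defs by (auto simp: vec2_eq_iff doubleton_eq_iff)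
  then show "card {right_seg, lower_seg, diag_seg} = 3" by simp
  show "\<forall>S\<in>{right_seg, lower_seg, diag_seg}. is_segment S"
    unfolding seg_defs by (auto intro!: is_segment_closed_segment simp: vec2_eq_iff)
  show "\<forall>S\<in>{right_seg, lower_seg, diag_seg}. (0::real^2) \<notin> S"
    using origin_notin_segs by blast
  show "maximal_region (RB {right_seg, lower_seg, diag_seg}) {0}"
    by (rule maximal_region_isolated_point[OF origin_in_RB, of "1/2"])
      (use notin_RB_near_origin in auto)
qed

end
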